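(* Let $\Bbbk$ be a field of characteristic zero. For every $\lambda\in\Bbbk^*$, the Lie algebra $\mathcal O(\lambda)$ is not perfect, and therefore is not simple.
   Context: $\mathcal W=\Bbbk[t,t^{-1}]\partial$ is the Witt algebra with basis $L_n=-t^{n+1}\partial$ and $[L_n,L_m]=(n-m)L_{n+m}$. For $\lambda\in\Bbbk^*$, $\mathcal O(\lambda)$ is the subalgebra spanned by $L_n-\lambda^nL_{-n}$, $n\ge1$. A Lie algebra $\mathfrak g$ is perfect if $[\mathfrak g,\mathfrak g]=\mathfrak g$. *)

theory Defs
  imports Main
begin

text \<open>The Witt algebra W = k[t,t^-1] d over a field k, modelled concretely:
  an element is its coefficient function int => k with respect to the basis L_n,
  required to have finite support.\<close>

definition witt :: "(int \<Rightarrow> 'k::field) set" where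
  "witt = {x. finite {n. x n \<noteq> 0}}"

definition witt_L :: "int \<Rightarrow> int \<Rightarrow> 'k::field" where
  "witt_L n = (\<lambda>m. if m = n then 1 else 0)"

text \<open>Bilinear extension of [L_i, L_j] = (i - j) L_(i+j): the coefficient at n
  is the sum over i + j = n of (i - j) x_i y_j.\<close>
definition witt_bracket :: "(int \<Rightarrow> 'k::field) \<Rightarrow> (int \<Rightarrow> 'k) \<Rightarrow> (int \<Rightarrow> 'k)" where
  "witt_bracket x y = (\<lambda>n. \<Sum>i\<in>{i. x i \<noteq> 0}. of_int (i - (n - i)) * x i * y (n - i))"

definition lin_span :: "(int \<Rightarrow> 'k::field) set \<Rightarrow> (int \<Rightarrow> 'k) set" where
  "lin_span S = {x. \<exists>F c. finite F \<and> F \<subseteq> S \<and> x = (\<lambda>m. \<Sum>v\<in>F. c v * v m)}"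

definition O_sub :: "'k::field \<Rightarrow> (int \<Rightarrow> 'k) set" where
  "O_sub lam = lin_span {(\<lambda>m. witt_L (int n) m - lam ^ n * witt_L (- int n) m) | n::nat. n \<ge> 1}"

definition derived :: "(int \<Rightarrow> 'k::field) set \<Rightarrow> (int \<Rightarrow> 'k) set" where
  "derived g = lin_span {witt_bracket x y | x y. x \<in> g \<and> y \<in> g}"

definition perfect :: "(int \<Rightarrow> 'k::field) set \<Rightarrow> bool" where
  "perfect g \<longleftrightarrow> derived g = g"

definition lie_ideal :: "(int \<Rightarrow> 'k::field) set \<Rightarrow> (int \<Rightarrow> 'k) set \<Rightarrow> bool" where
  "lie_ideal g I \<longleftrightarrow> I \<subseteq> g \<and> lin_span I = I \<and> (\<forall>x\<in>g. \<forall>y\<in>I. witt_bracket x y \<in> I)"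

definition simple_lie :: "(int \<Rightarrow> 'k::field) set \<Rightarrow> bool" where
  "simple_lie g \<longleftrightarrow> (\<exists>x\<in>g. \<exists>y\<in>g. witt_bracket x y \<noteq> (\<lambda>_. 0))
      \<and> (\<forall>I. lie_ideal g I \<longrightarrow> I = {\<lambda>_. 0} \<or> I = g)"

end

(*
  Let E_k = L_k - lam^k L_(-k), so that O(lam) is spanned by the E_k with k > 0 and
  [E_a, E_b] = (a - b) E_(a+b) - (a + b) lam^b E_(a-b).  The linear functional
  phi(x) = sum over even n > 0 of n lam^(n/2) x_n takes the value k lam^(k/2) on E_k for
  even k and 0 for odd k; as a + b and a - b have the same parity and
  lam^b lam^((a-b)/2) = lam^((a+b)/2), phi kills every [E_a, E_b], hence the whole derived
  algebra.  Since phi(E_2) = 2 lam is nonzero in characteristic zero, the derived algebra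
  is a proper ideal, and it is nonzero because [E_2, E_1] = E_3 - 3 lam E_1.
*)
theory Submission
  imports Defs HOL.Modules "HOL-Library.Function_Algebras"
begin

interpretation fun_space: module "\<lambda>(c::'k::field) (x::int \<Rightarrow> 'k) m. c * x m"
  by standard (simp_all add: fun_eq_iff algebra_simps)

lemma sum_fun_apply: "(\<Sum>a\<in>A. f a) x = (\<Sum>a\<in>A. f a x)"
  by (induction A rule: infinite_finite_induct) auto

lemma lin_span_eq_span: "lin_span S = fun_space.span S"
  unfolding lin_span_def fun_space.span_explicit by (auto simp: fun_eq_iff sum_fun_apply)

lemma subspace_witt: "fun_space.subspace witt"
proof -
  have "{n. (x + y) n \<noteq> 0} \<subseteq> {n. x n \<noteq> 0} \<union> {n. y n \<noteq> 0}" for x y :: "int \<Rightarrow> 'k::field"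
    by auto
  then show ?thesis
    unfolding fun_space.subspace_def witt_def by (auto intro: finite_subset)
qed

lemma witt_L_in_witt: "witt_L k \<in> witt"
  unfolding witt_def witt_L_def by simp

lemma witt_bracket_eq_sum:
  assumes "finite S" "{i. x i \<noteq> 0} \<subseteq> S"
  shows "witt_bracket x y n = (\<Sum>i\<in>S. of_int (i - (n - i)) * x i * y (n - i))"
  unfolding witt_bracket_def by (rule sum.mono_neutral_left) (use assms in auto)

lemma witt_bracket_add_left:
  assumes "x \<in> witt" "y \<in> witt"
  shows "witt_bracket (x + y) z = witt_bracket x z + witt_bracket y z"
proof
  fix n
  let ?S = "{i. x i \<noteq> 0} \<union> {i. y i \<noteq> 0}"
  have "finite ?S" using assms unfolding witt_def by simp
  then show "witt_bracket (x + y) z n = (witt_bracket x z + witt_bracket y z) n"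
    unfolding plus_fun_apply
    by (subst (1 2 3) witt_bracket_eq_sum[of ?S]) (auto simp: distrib_left distrib_right sum.distrib)
qed

lemma witt_bracket_scale_left:
  "witt_bracket (\<lambda>m. c * x m) z = (\<lambda>n. c * witt_bracket x z n)"
  by (cases "c = 0") (simp_all add: witt_bracket_def sum_distrib_left mult_ac)

lemma witt_bracket_add_right: "witt_bracket x (y + z) = witt_bracket x y + witt_bracket x z"
  by (simp add: witt_bracket_def fun_eq_iff distrib_left sum.distrib)

lemma witt_bracket_zero_left: "witt_bracket 0 y = 0"
  by (simp add: witt_bracket_def fun_eq_iff)

lemma witt_bracket_zero_right: "witt_bracket x 0 = 0"
  by (simp add: witt_bracket_def fun_eq_iff)

lemma witt_bracket_scale_right:
  "witt_bracket x (\<lambda>m. c * y m) = (\<lambda>n. c * witt_bracket x y n)"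
  by (simp add: witt_bracket_def fun_eq_iff sum_distrib_left mult_ac)

lemma witt_bracket_diff_left:
  assumes "x \<in> witt" "y \<in> witt"
  shows "witt_bracket (x - y) z = witt_bracket x z - witt_bracket y z"
proof -
  have "x - y \<in> witt"
    using assms by (rule fun_space.subspace_diff[OF subspace_witt])
  from witt_bracket_add_left[OF this assms(2)] show ?thesis
    by (simp add: eq_diff_eq)
qed

lemma witt_bracket_diff_right: "witt_bracket x (y - z) = witt_bracket x y - witt_bracket x z"
  using witt_bracket_add_right[of x "y - z" z] by simp

lemma witt_bracket_in_span:
  assumes "S \<subseteq> witt" "x \<in> fun_space.span S" "y \<in> fun_space.span T"
  shows "witt_bracket x y \<in> fun_space.span {witt_bracket s t | s t. s \<in> S \<and> t \<in> T}"
    (is "_ \<in> fun_space.span ?B")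
proof -
  have right: "witt_bracket s y \<in> fun_space.span ?B" if "s \<in> S" for s
    using assms(3)
  proof (induction rule: fun_space.span_induct)
    show "fun_space.subspace {y. witt_bracket s y \<in> fun_space.span ?B}"
      unfolding fun_space.subspace_def
      by (auto simp: witt_bracket_add_right witt_bracket_scale_right fun_space.span_add
          fun_space.span_scale witt_bracket_zero_right fun_space.span_zero)
  qed (use that in \<open>auto intro: fun_space.span_base\<close>)
  have "x \<in> witt \<and> witt_bracket x y \<in> fun_space.span ?B"
    using assms(2)
  proof (induction rule: fun_space.span_induct)
    show "fun_space.subspace {x. x \<in> witt \<and> witt_bracket x y \<in> fun_space.span ?B}"
      using subspace_witt unfolding fun_space.subspace_def
      by (auto simp: witt_bracket_add_left witt_bracket_scale_left fun_space.span_add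
          fun_space.span_scale witt_bracket_zero_left fun_space.span_zero)
  qed (use assms(1) right in auto)
  then show ?thesis ..
qed

definition weighted_sum :: "(int \<Rightarrow> 'k::field) \<Rightarrow> (int \<Rightarrow> 'k) \<Rightarrow> 'k" where
  "weighted_sum w x = (\<Sum>n | x n \<noteq> 0. w n * x n)"

lemma weighted_sum_eq_sum:
  assumes "finite S" "{n. x n \<noteq> 0} \<subseteq> S"
  shows "weighted_sum w x = (\<Sum>n\<in>S. w n * x n)"
  unfolding weighted_sum_def by (rule sum.mono_neutral_left) (use assms in auto)

lemma weighted_sum_add:
  assumes "x \<in> witt" "y \<in> witt"
  shows "weighted_sum w (x + y) = weighted_sum w x + weighted_sum w y"
proof -
  let ?S = "{i. x i \<noteq> 0} \<union> {i. y i \<noteq> 0}"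
  have "finite ?S" using assms unfolding witt_def by simp
  then show ?thesis
    by (subst (1 2 3) weighted_sum_eq_sum[of ?S]) (auto simp: distrib_left sum.distrib)
qed

lemma weighted_sum_scale: "weighted_sum w (\<lambda>m. c * x m) = c * weighted_sum w x"
  by (cases "c = 0") (simp_all add: weighted_sum_def sum_distrib_left mult_ac)

lemma weighted_sum_zero: "weighted_sum w 0 = 0"
  by (simp add: weighted_sum_def)

lemma weighted_sum_diff:
  assumes "x \<in> witt" "y \<in> witt"
  shows "weighted_sum w (x - y) = weighted_sum w x - weighted_sum w y"
proof -
  have "x - y \<in> witt"
    using assms by (rule fun_space.subspace_diff[OF subspace_witt])
  from weighted_sum_add[OF this assms(2)] show ?thesis
    by (simp add: eq_diff_eq)
qed

lemma weighted_sum_witt_L: "weighted_sum w (witt_L k) = w k"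
  by (simp add: weighted_sum_def witt_L_def)

lemma subspace_weighted_sum_kernel: "fun_space.subspace {x \<in> witt. weighted_sum w x = 0}"
  using subspace_witt unfolding fun_space.subspace_def
  by (auto simp: weighted_sum_add weighted_sum_scale weighted_sum_zero)

text \<open>Defined for all integers k, so that the bracket formula below needs no case split on
  the sign of a - b.\<close>
definition O_gen :: "'k::field \<Rightarrow> int \<Rightarrow> int \<Rightarrow> 'k" where
  "O_gen lam k = witt_L k - (\<lambda>m. lam powi k * witt_L (- k) m)"

lemma O_gen_in_witt: "O_gen lam k \<in> witt"
  unfolding O_gen_def
  by (intro fun_space.subspace_diff[OF subspace_witt] fun_space.subspace_scale[OF subspace_witt]
      witt_L_in_witt)

lemma O_sub_eq_span: "O_sub lam = fun_space.span (O_gen lam ` {0<..})"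
proof -
  have "(\<lambda>m. witt_L (int n) m - lam ^ n * witt_L (- int n) m) = O_gen lam (int n)" for n
    by (simp add: O_gen_def fun_eq_iff)
  then have "{(\<lambda>m. witt_L (int n) m - lam ^ n * witt_L (- int n) m) | n. n \<ge> 1} = O_gen lam ` int ` {1..}"
    by auto
  also have "int ` {1..} = {0<..}"
    by (auto simp: image_iff dest: zero_less_imp_eq_int)
  finally show ?thesis
    unfolding O_sub_def lin_span_eq_span by simp
qed

lemma subspace_O_sub: "fun_space.subspace (O_sub lam)"
  unfolding O_sub_eq_span by simp

lemma O_gen_uminus:
  assumes "lam \<noteq> 0"
  shows "O_gen lam (- k) = (\<lambda>m. - (lam powi (- k)) * O_gen lam k m)"
  using assms by (auto simp: O_gen_def fun_eq_iff algebra_simps power_int_minus)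

lemma O_gen_in_O_sub:
  assumes "lam \<noteq> 0"
  shows "O_gen lam k \<in> O_sub lam"
proof -
  have pos: "O_gen lam k \<in> O_sub lam" if "k > 0" for k
    using that unfolding O_sub_eq_span by (intro fun_space.span_base) simp
  consider "k > 0" | "k = 0" | "k < 0" by linarith
  then show ?thesis
  proof cases
    case 2
    then have "O_gen lam k = 0" by (simp add: O_gen_def fun_eq_iff)
    then show ?thesis unfolding O_sub_eq_span by (simp add: fun_space.span_zero)
  next
    case 3
    then have "O_gen lam (- k) \<in> O_sub lam" by (intro pos) simp
    then have "(\<lambda>m. - (lam powi k) * O_gen lam (- k) m) \<in> O_sub lam"
      unfolding O_sub_eq_span by (rule fun_space.span_scale)
    then show ?thesis using O_gen_uminus[OF assms, of "- k"] by simp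
  qed (rule pos)
qed

lemma O_sub_subset_witt: "O_sub lam \<subseteq> witt"
  unfolding O_sub_eq_span by (intro fun_space.span_minimal subspace_witt) (auto intro: O_gen_in_witt)

lemma witt_bracket_L: "witt_bracket (witt_L i) (witt_L j) = (\<lambda>n. of_int (i - j) * witt_L (i + j) n)"
proof
  fix n
  have "witt_bracket (witt_L i) (witt_L j) n = of_int (i - (n - i)) * witt_L j (n - i)"
    by (subst witt_bracket_eq_sum[of "{i}"]) (auto simp: witt_L_def)
  then show "witt_bracket (witt_L i) (witt_L j) n = of_int (i - j) * witt_L (i + j) n"
    by (auto simp: witt_L_def)
qed

lemma witt_bracket_O_gen:
  assumes "lam \<noteq> 0"
  shows "witt_bracket (O_gen lam a) (O_gen lam b) =
    (\<lambda>n. of_int (a - b) * O_gen lam (a + b) n) - (\<lambda>n. of_int (a + b) * lam powi b * O_gen lam (a - b) n)"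
proof
  fix n
  have powers: "lam powi (a + b) = lam powi a * lam powi b" "lam powi a = lam powi b * lam powi (a - b)"
    using power_int_add[of lam a b] power_int_add[of lam b "a - b"] assms by simp_all
  have "witt_bracket (O_gen lam a) (O_gen lam b) n =
    of_int (a - b) * witt_L (a + b) n - lam powi a * (- of_int a - of_int b) * witt_L (b - a) n -
    lam powi b * ((of_int a + of_int b) * witt_L (a - b) n - lam powi a * (of_int b - of_int a) * witt_L (- a - b) n)"
    unfolding O_gen_def[of lam a] O_gen_def[of lam b]
    by (simp add: witt_bracket_diff_left witt_bracket_diff_right witt_bracket_scale_left
        witt_bracket_scale_right witt_bracket_L witt_L_in_witt fun_space.subspace_scale[OF subspace_witt])
  also have "\<dots> = of_int (a - b) * (witt_L (a + b) n - lam powi (a + b) * witt_L (- (a + b)) n)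
    - of_int (a + b) * lam powi b * (witt_L (a - b) n - lam powi (a - b) * witt_L (- (a - b)) n)"
    unfolding powers by (simp add: algebra_simps)
  finally show "witt_bracket (O_gen lam a) (O_gen lam b) n =
    ((\<lambda>n. of_int (a - b) * O_gen lam (a + b) n) - (\<lambda>n. of_int (a + b) * lam powi b * O_gen lam (a - b) n)) n"
    by (simp add: O_gen_def)
qed

text \<open>Only even indices carry weight because lam need not be a square in the field.\<close>
definition even_weight :: "'k::field \<Rightarrow> int \<Rightarrow> 'k" where
  "even_weight lam n = (if 0 < n \<and> even n then of_int n * lam powi (n div 2) else 0)"

lemma weighted_sum_O_gen:
  assumes "lam \<noteq> 0"
  shows "weighted_sum (even_weight lam) (O_gen lam k) = (if even k then of_int k * lam powi (k div 2) else 0)"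
proof -
  have "weighted_sum (even_weight lam) (O_gen lam k) = even_weight lam k - lam powi k * even_weight lam (- k)"
    unfolding O_gen_def
    by (simp add: weighted_sum_diff weighted_sum_scale weighted_sum_witt_L witt_L_in_witt
        fun_space.subspace_scale[OF subspace_witt])
  also have "\<dots> = (if even k then of_int k * lam powi (k div 2) else 0)"
  proof (cases "even k")
    case True
    then obtain j where k: "k = 2 * j" by blast
    have "lam powi (2 * j) * lam powi (- j) = lam powi j"
      using assms power_int_add[of lam "2 * j" "- j"] by simp
    moreover have "(2 * j) div 2 = j" "(- (2 * j)) div 2 = - j"
      by simp_all
    ultimately show ?thesis
      unfolding even_weight_def k by (auto simp: algebra_simps)
  qed (simp add: even_weight_def)
  finally show ?thesis .
qed

lemma weighted_sum_bracket_O_gen: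
  assumes "lam \<noteq> 0"
  shows "weighted_sum (even_weight lam) (witt_bracket (O_gen lam a) (O_gen lam b)) = 0"
proof -
  let ?\<phi> = "weighted_sum (even_weight lam)"
  have "?\<phi> (witt_bracket (O_gen lam a) (O_gen lam b))
      = of_int (a - b) * ?\<phi> (O_gen lam (a + b)) - of_int (a + b) * lam powi b * ?\<phi> (O_gen lam (a - b))"
    unfolding witt_bracket_O_gen[OF assms]
    by (simp add: weighted_sum_diff weighted_sum_scale O_gen_in_witt
        fun_space.subspace_scale[OF subspace_witt])
  also have "\<dots> = 0"
  proof (cases "even (a + b)")
    case True
    then have "even (a - b)" "(a + b) div 2 = b + (a - b) div 2"
      by presburger+
    moreover from this(2) have "lam powi ((a + b) div 2) = lam powi b * lam powi ((a - b) div 2)"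
      using assms by (simp add: power_int_add)
    ultimately show ?thesis
      using True assms by (simp add: weighted_sum_O_gen algebra_simps)
  next
    case False
    then have "odd (a - b)" by presburger
    with False assms show ?thesis
      by (simp add: weighted_sum_O_gen)
  qed
  finally show ?thesis .
qed

lemma witt_bracket_O_sub:
  assumes "lam \<noteq> 0" "x \<in> O_sub lam" "y \<in> O_sub lam"
  shows "witt_bracket x y \<in> O_sub lam \<inter> {z \<in> witt. weighted_sum (even_weight lam) z = 0}"
proof -
  let ?gens = "O_gen lam ` {0<..}"
  have "witt_bracket x y \<in> fun_space.span {witt_bracket s t | s t. s \<in> ?gens \<and> t \<in> ?gens}"
    using assms(2,3) unfolding O_sub_eq_span
    by (intro witt_bracket_in_span) (auto intro: O_gen_in_witt)
  also have "\<dots> \<subseteq> O_sub lam \<inter> {z \<in> witt. weighted_sum (even_weight lam) z = 0}"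
  proof (intro fun_space.span_minimal fun_space.subspace_inter subspace_O_sub
      subspace_weighted_sum_kernel subsetI)
    fix z assume "z \<in> {witt_bracket s t | s t. s \<in> ?gens \<and> t \<in> ?gens}"
    then obtain a b where z: "z = witt_bracket (O_gen lam a) (O_gen lam b)" by blast
    have "z \<in> O_sub lam"
      unfolding z witt_bracket_O_gen[OF assms(1)] O_sub_eq_span
      by (intro fun_space.span_diff fun_space.span_scale O_gen_in_O_sub[OF assms(1), unfolded O_sub_eq_span])
    then show "z \<in> O_sub lam \<inter> {z \<in> witt. weighted_sum (even_weight lam) z = 0}"
      using O_sub_subset_witt weighted_sum_bracket_O_gen[OF assms(1)] z by auto
  qed
  finally show ?thesis .
qed

lemma derived_O_sub:
  assumes "lam \<noteq> 0"
  shows "derived (O_sub lam) \<subseteq> O_sub lam \<inter> {z \<in> witt. weighted_sum (even_weight lam) z = 0}"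
  unfolding derived_def lin_span_eq_span
  using witt_bracket_O_sub[OF assms]
  by (intro fun_space.span_minimal fun_space.subspace_inter subspace_O_sub subspace_weighted_sum_kernel)
    blast

lemma lie_ideal_derived:
  assumes "derived g \<subseteq> g"
  shows "lie_ideal g (derived g)"
  unfolding lie_ideal_def
proof (intro conjI ballI assms)
  show "lin_span (derived g) = derived g"
    unfolding derived_def lin_span_eq_span fun_space.span_span ..
  fix x y assume "x \<in> g" "y \<in> derived g"
  then show "witt_bracket x y \<in> derived g"
    using assms unfolding derived_def lin_span_eq_span by (blast intro: fun_space.span_base)
qed

theorem corollary4p19:
  fixes lam :: "'k::field_char_0"
  assumes "lam \<noteq> 0"
  shows "\<not> perfect (O_sub lam) \<and> \<not> simple_lie (O_sub lam)"
proof -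
  let ?D = "derived (O_sub lam)"
  have "weighted_sum (even_weight lam) (O_gen lam 2) = 2 * lam"
    using assms by (simp add: weighted_sum_O_gen)
  then have "O_gen lam 2 \<in> O_sub lam - ?D"
    using O_gen_in_O_sub[OF assms] derived_O_sub[OF assms] assms by auto
  then have proper: "?D \<noteq> O_sub lam" by blast
  have "witt_bracket (O_gen lam 2) (O_gen lam 1) \<in> ?D"
    unfolding derived_def lin_span_eq_span
    using O_gen_in_O_sub[OF assms] by (blast intro: fun_space.span_base)
  moreover have "witt_bracket (O_gen lam 2) (O_gen lam 1) 3 = 1"
    unfolding witt_bracket_O_gen[OF assms] by (simp add: O_gen_def witt_L_def)
  ultimately have nonzero: "?D \<noteq> {\<lambda>_. 0}" by force
  have "lie_ideal (O_sub lam) ?D"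
    using derived_O_sub[OF assms] by (intro lie_ideal_derived) blast
  with proper nonzero show ?thesis
    unfolding perfect_def simple_lie_def by blast
qed

end
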